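(* Let $d\ge2$ and let $\rho$ be a finite-dimensional representation of the Jacobi algebra $\mathbb C\langle a,b,c\rangle/([b,c],\,[c,a],\,[a,b]+d\,c^{d-1})$. Then each of the operators $\rho(a),\rho(b),\rho(c)$ preserves the generalized eigenspaces of each of the others, and $\rho(c)$ is nilpotent (its only generalized eigenvalue is $0$). Consequently $\rho$ decomposes canonically as $\rho\cong\bigoplus_{s\in\Sigma}\rho_s$ into nonzero submodules, with $\Sigma\subset\mathbb C^2$ finite, where for $s=(s_1,s_2)$ the generalized eigenvalues of $\rho(a),\rho(b),\rho(c)$ on $\rho_s$ are $s_1,s_2,0$ respectively.
   Context: This algebra is the Jacobi algebra of the three-loop quiver with potential $W_d=[a,b]c+c^d$, i.e. the quotient of the free algebra by the cyclic derivatives of $W_d$ with respect to $a,b,c$. *)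

theory Defs
  imports "HOL-Analysis.Analysis"
begin

definition mpow :: "complex^'n^'n \<Rightarrow> nat \<Rightarrow> complex^'n^'n" where
  "mpow X k = (((**) X) ^^ k) (mat 1)"

definition gen_eigenspace :: "complex^'n^'n \<Rightarrow> complex \<Rightarrow> (complex^'n) set" where
  "gen_eigenspace X \<mu> = {v. \<exists>k. mpow (X - mat \<mu>) k *v v = 0}"

definition gen_eigenvalues_on :: "complex^'n^'n \<Rightarrow> (complex^'n) set \<Rightarrow> complex set" where
  "gen_eigenvalues_on X W = {\<mu>. \<exists>v\<in>W. v \<noteq> 0 \<and> v \<in> gen_eigenspace X \<mu>}"

definition csubspace :: "(complex^'n) set \<Rightarrow> bool" where
  "csubspace W \<longleftrightarrow> 0 \<in> W \<and> (\<forall>x\<in>W. \<forall>y\<in>W. x + y \<in> W) \<and> (\<forall>c x. x \<in> W \<longrightarrow> c *s x \<in> W)"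

definition invariant :: "complex^'n^'n \<Rightarrow> (complex^'n) set \<Rightarrow> bool" where
  "invariant X W \<longleftrightarrow> (\<forall>v\<in>W. X *v v \<in> W)"

definition is_direct_sum :: "'s set \<Rightarrow> ('s \<Rightarrow> (complex^'n) set) \<Rightarrow> bool" where
  "is_direct_sum S V \<longleftrightarrow>
     (\<forall>v. \<exists>f. (\<forall>s\<in>S. f s \<in> V s) \<and> v = (\<Sum>s\<in>S. f s)) \<and>
     (\<forall>f. (\<forall>s\<in>S. f s \<in> V s) \<and> (\<Sum>s\<in>S. f s) = 0 \<longrightarrow> (\<forall>s\<in>S. f s = 0))"

end

theory Submission
  imports Defs "HOL-Computational_Algebra.Computational_Algebra"
    "HOL-Computational_Algebra.Field_as_Ring"
begin

text \<open>
  Put \<open>N = d C\<^sup>d\<^sup>-\<^sup>1\<close>, so that \<open>BA - AB = N\<close> and \<open>N\<close> commutes with \<open>A\<close> and \<open>B\<close>.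
  Whenever \<open>YX - XY = M\<close> with \<open>M\<close> commuting with \<open>Y\<close>, one has
  \<open>(Y - \<mu>)\<^sup>k\<^sup>+\<^sup>1 X = X (Y - \<mu>)\<^sup>k\<^sup>+\<^sup>1 + (k + 1) M (Y - \<mu>)\<^sup>k\<close>, so \<open>X\<close> preserves the generalized
  eigenspaces of \<open>Y\<close>. If \<open>C\<close> had a generalized eigenvalue \<open>\<lambda> \<noteq> 0\<close>, some
  \<open>W = V\<^sub>C(\<lambda>) \<inter> V\<^sub>A(\<alpha>)\<close> would be nonzero and invariant under \<open>A\<close> and \<open>B\<close>. Taking \<open>k\<close>
  minimal with \<open>(A - \<alpha>)\<^sup>k W = 0\<close>, the same identity applied to \<open>Bw\<close> gives a nonzero
  \<open>t = (A - \<alpha>)\<^sup>k\<^sup>-\<^sup>1 w \<in> W\<close> with \<open>C\<^sup>d\<^sup>-\<^sup>1 t = 0\<close>, i.e. \<open>t \<in> V\<^sub>C(0) \<inter> V\<^sub>C(\<lambda>) = 0\<close>.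
  Hence \<open>C\<close> is nilpotent, and the decomposition is the joint generalized eigenspace
  decomposition of \<open>A\<close> and \<open>B\<close>. Generalized eigenspaces are handled through
  polynomials in a matrix: by Bezout, coprime polynomials have independent kernels, and an
  annihilating polynomial splits into linear factors over \<open>\<complex>\<close>.
\<close>

section \<open>Polynomials applied to matrices\<close>

lemma mpow_0 [simp]: "mpow X 0 = mat 1"
  by (simp add: mpow_def)

lemma mpow_Suc_mult_vec: "mpow X (Suc k) *v v = X *v (mpow X k *v v)"
  by (simp add: mpow_def matrix_vector_mul_assoc)

lemma mat_mult_vec: "mat c *v v = c *s (v :: complex^'n)"
  by (simp add: vec_eq_iff matrix_vector_mult_def mat_def if_distrib if_distribR cong: if_cong)

lemma diff_mat_mult_vec: "(X - mat c) *v v = X *v v - c *s (v :: complex^'n)"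
  by (simp add: matrix_vector_mult_diff_rdistrib mat_mult_vec)

lemma uminus_matrix_mult_vec: "(- X) *v v = - (X *v (v :: complex^'n))"
  using matrix_vector_mult_diff_rdistrib[of 0 X v] by simp

definition poly_act :: "complex poly \<Rightarrow> complex^'n^'n \<Rightarrow> complex^'n \<Rightarrow> complex^'n" where
  "poly_act p X v = (\<Sum>i\<le>degree p. coeff p i *s (mpow X i *v v))"

lemma poly_act_upto:
  "degree p \<le> n \<Longrightarrow> poly_act p X v = (\<Sum>i\<le>n. coeff p i *s (mpow X i *v v))"
  unfolding poly_act_def by (rule sum.mono_neutral_left) (auto simp: coeff_eq_0)

lemma poly_act_0 [simp]: "poly_act 0 X v = 0"
  by (simp add: poly_act_def)

lemma poly_act_add: "poly_act (p + q) X v = poly_act p X v + poly_act q X v"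
proof -
  let ?n = "max (degree p) (degree q)"
  have "poly_act (p + q) X v = (\<Sum>i\<le>?n. coeff (p + q) i *s (mpow X i *v v))"
    by (rule poly_act_upto) (simp add: degree_add_le)
  also have "\<dots> = poly_act p X v + poly_act q X v"
    by (simp add: poly_act_upto[of p ?n] poly_act_upto[of q ?n] vector_sadd_rdistrib sum.distrib)
  finally show ?thesis .
qed

lemma poly_act_diff: "poly_act (p - q) X v = poly_act p X v - poly_act q X v"
  by (metis add_diff_cancel diff_add_cancel poly_act_add)

lemma poly_act_sum: "poly_act (\<Sum>i\<in>S. f i) X v = (\<Sum>i\<in>S. poly_act (f i) X v)"
  by (induction S rule: infinite_finite_induct) (auto simp: poly_act_add)

lemma poly_act_smult: "poly_act (smult a p) X v = a *s poly_act p X v"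
proof -
  have "poly_act (smult a p) X v = (\<Sum>i\<le>degree p. coeff (smult a p) i *s (mpow X i *v v))"
    by (rule poly_act_upto) (simp add: degree_smult_le)
  then show ?thesis
    by (simp add: poly_act_def vec.scale_sum_right vector_smult_assoc)
qed

lemma poly_act_pCons: "poly_act (pCons a p) X v = a *s v + X *v poly_act p X v"
proof -
  have "poly_act (pCons a p) X v
      = (\<Sum>i\<le>Suc (degree p). coeff (pCons a p) i *s (mpow X i *v v))"
    by (rule poly_act_upto) (simp add: degree_pCons_le)
  also have "\<dots> = a *s v + (\<Sum>i\<le>degree p. coeff p i *s (X *v (mpow X i *v v)))"
    by (subst sum.atMost_Suc_shift) (simp add: mpow_Suc_mult_vec del: sum.atMost_Suc)
  also have "\<dots> = a *s v + X *v poly_act p X v"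
    by (simp add: poly_act_def vec.sum vector_scalar_commute)
  finally show ?thesis .
qed

lemma poly_act_mult: "poly_act (p * q) X v = poly_act p X (poly_act q X v)"
  by (induction p) (simp_all add: mult_pCons_left poly_act_add poly_act_smult poly_act_pCons)

lemma poly_act_1 [simp]: "poly_act 1 X v = v"
  using poly_act_pCons[of 1 0 X v] by (simp add: one_pCons)

lemma poly_act_monom: "poly_act (monom c i) X v = c *s (mpow X i *v v)"
proof -
  have "poly_act (monom c i) X v = (\<Sum>j\<le>i. coeff (monom c i) j *s (mpow X j *v v))"
    by (rule poly_act_upto) (simp add: degree_monom_le)
  then show ?thesis
    by (simp add: coeff_monom if_distrib if_distribR cong: if_cong)
qed

lemma poly_act_linear_power: "poly_act ([:-z, 1:] ^ m) X v = mpow (X - mat z) m *v v"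
proof (induction m arbitrary: v)
  case (Suc m)
  have lin: "poly_act [:-z, 1:] X u = (X - mat z) *v u" for u
    using poly_act_pCons[of "-z" "[:1:]" X u] poly_act_pCons[of 1 0 X u]
    by (simp add: diff_mat_mult_vec vector_smult_lneg)
  show ?case
    by (simp only: power_Suc poly_act_mult lin Suc mpow_Suc_mult_vec)
qed simp

lemma poly_act_commute: "X *v poly_act p X v = poly_act p X (X *v v)"
proof -
  have "poly_act (monom 1 1) X u = X *v u" for u
    by (simp add: poly_act_monom mpow_Suc_mult_vec)
  then show ?thesis
    by (metis mult.commute poly_act_mult)
qed

lemma poly_act_add_vec: "poly_act p X (v + w) = poly_act p X v + poly_act p X w"
  by (simp add: poly_act_def matrix_vector_right_distrib vector_add_ldistrib sum.distrib)

lemma poly_act_scale_vec: "poly_act p X (c *s v) = c *s poly_act p X v"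
  by (simp add: poly_act_def vector_scalar_commute vec.scale_sum_right vector_smult_assoc
      mult.commute)

lemma poly_act_zero_vec [simp]: "poly_act p X 0 = 0"
  by (simp add: poly_act_def)

lemma poly_act_sum_vec: "poly_act p X (\<Sum>i\<in>S. f i) = (\<Sum>i\<in>S. poly_act p X (f i))"
  by (induction S rule: infinite_finite_induct) (simp_all add: poly_act_add_vec)

lemma coprime_poly_bezout:
  assumes "coprime p (q :: complex poly)"
  obtains x y where "x * p + y * q = 1"
  using bezout_coefficients_fst_snd[of p q] coprime_imp_gcd_eq_1[OF assms] by metis

lemma poly_act_coprime_eq_0:
  assumes "coprime p q" "poly_act p X w = 0" "poly_act q X w = 0"
  shows "w = 0"
proof -
  obtain x y where "x * p + y * q = 1" using coprime_poly_bezout[OF assms(1)] .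
  then have "w = poly_act (x * p + y * q) X w" by simp
  also have "\<dots> = 0" by (simp add: poly_act_add poly_act_mult assms)
  finally show ?thesis .
qed

lemma coprime_linear_power:
  assumes "poly r z \<noteq> 0"
  shows "coprime ([:-z, 1:] ^ m) (r :: complex poly)"
proof -
  have "prime_elem [:-z, 1 :: complex:]" by (rule prime_elem_linear_field_poly) simp
  moreover have "\<not> [:-z, 1:] dvd r" using dvd_iff_poly_eq_0[of "-z" r] assms by simp
  ultimately show ?thesis by (simp add: prime_elem_imp_coprime)
qed

lemma annihilating_poly_vec:
  fixes X :: "complex^'n^'n"
  obtains p where "p \<noteq> 0" "poly_act p X w = 0"
proof -
  define g where "g i = mpow X i *v w" for i
  let ?D = "CARD('n)"
  show ?thesis
  proof (cases "inj_on g {..?D}")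
    case False
    then obtain i j where ij: "i \<noteq> j" "g i = g j" by (auto simp: inj_on_def)
    let ?p = "monom 1 i - monom (1 :: complex) j"
    have "coeff ?p i = 1" using ij by (simp add: coeff_monom)
    then have "?p \<noteq> 0" by (metis coeff_0 zero_neq_one)
    moreover have "poly_act ?p X w = 0" using ij by (simp add: poly_act_diff poly_act_monom g_def)
    ultimately show ?thesis by (rule that)
  next
    case True
    let ?S = "g ` {..?D}"
    have "vec.dependent ?S"
    proof (rule ccontr)
      assume "\<not> vec.dependent ?S"
      then have "card ?S \<le> vec.dim (UNIV :: (complex^'n) set)"
        using vec.independent_bound_general vec.dim_subset[of ?S UNIV] by fastforce
      then show False using card_image[OF True] by (simp add: card_cart_basis)
    qed
    then obtain u where u: "\<exists>v\<in>?S. u v \<noteq> 0" "(\<Sum>v\<in>?S. u v *s v) = 0"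
      using vec.dependent_finite[of ?S] by auto
    define p where "p = (\<Sum>i\<le>?D. monom (u (g i)) i)"
    have "poly_act p X w = (\<Sum>i\<le>?D. u (g i) *s g i)"
      by (simp add: p_def poly_act_sum poly_act_monom g_def)
    also have "\<dots> = (\<Sum>v\<in>?S. u v *s v)"
      by (simp add: sum.reindex[OF True])
    finally have "poly_act p X w = 0" using u(2) by simp
    moreover obtain i where "i \<le> ?D" "u (g i) \<noteq> 0" using u(1) by auto
    then have "coeff p i \<noteq> 0" by (simp add: p_def coeff_sum_monom)
    ultimately show ?thesis by (intro that) auto
  qed
qed

text \<open>The product of annihilators of the standard basis vectors annihilates everything.\<close>

lemma annihilating_poly:
  fixes X :: "complex^'n^'n"
  obtains p where "p \<noteq> 0" "\<And>v. poly_act p X v = 0"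
proof -
  have "\<forall>i. \<exists>q. q \<noteq> 0 \<and> poly_act q X (axis i 1) = 0"
    by (metis annihilating_poly_vec)
  then obtain q where q: "\<And>i. q i \<noteq> 0" "\<And>i. poly_act (q i) X (axis i 1) = 0"
    by metis
  define p where "p = (\<Prod>i\<in>UNIV. q i)"
  have axis: "poly_act p X (axis i 1) = 0" for i
  proof -
    have "p = (\<Prod>j\<in>UNIV - {i}. q j) * q i" by (simp add: p_def prod.remove mult.commute)
    then show ?thesis by (simp add: poly_act_mult q(2))
  qed
  have "poly_act p X v = 0" for v
    by (subst basis_expansion[symmetric]) (simp add: poly_act_sum_vec poly_act_scale_vec axis)
  moreover have "p \<noteq> 0" using q(1) by (simp add: p_def)
  ultimately show ?thesis using that by blast
qed

section \<open>Generalized eigenspaces\<close>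

lemma csubspace_sum: "csubspace W \<Longrightarrow> (\<And>i. i \<in> S \<Longrightarrow> f i \<in> W) \<Longrightarrow> sum f S \<in> W"
  by (induction S rule: infinite_finite_induct) (auto simp: csubspace_def)

lemma csubspace_inter: "csubspace S \<Longrightarrow> csubspace T \<Longrightarrow> csubspace (S \<inter> T)"
  by (simp add: csubspace_def)

lemma invariant_inter: "invariant X S \<Longrightarrow> invariant X T \<Longrightarrow> invariant X (S \<inter> T)"
  by (simp add: invariant_def)

lemma poly_act_in_csubspace:
  assumes "csubspace W" "invariant X W" "v \<in> W"
  shows "poly_act p X v \<in> W"
proof -
  have "mpow X i *v v \<in> W" for i
    by (induction i) (use assms in \<open>auto simp: mpow_Suc_mult_vec invariant_def\<close>)
  then show ?thesis
    unfolding poly_act_def using assms(1) by (intro csubspace_sum) (auto simp: csubspace_def)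
qed

lemma in_gen_eigenspace_iff_poly_act:
  "v \<in> gen_eigenspace X z \<longleftrightarrow> (\<exists>k. poly_act ([:-z, 1:] ^ k) X v = 0)"
  by (simp add: gen_eigenspace_def poly_act_linear_power)

lemma csubspace_gen_eigenspace: "csubspace (gen_eigenspace X z)"
  unfolding csubspace_def
proof (intro conjI ballI allI impI)
  show "0 \<in> gen_eigenspace X z" by (simp add: gen_eigenspace_def)
next
  fix v w assume "v \<in> gen_eigenspace X z" "w \<in> gen_eigenspace X z"
  then obtain k j where v: "poly_act ([:-z, 1:] ^ k) X v = 0"
    and w: "poly_act ([:-z, 1:] ^ j) X w = 0"
    by (auto simp: in_gen_eigenspace_iff_poly_act)
  have "poly_act ([:-z, 1:] ^ (j + k)) X v = 0" by (simp add: power_add poly_act_mult v)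
  moreover have "poly_act ([:-z, 1:] ^ (k + j)) X w = 0" by (simp add: power_add poly_act_mult w)
  ultimately have "poly_act ([:-z, 1:] ^ (j + k)) X (v + w) = 0"
    by (simp add: poly_act_add_vec add.commute[of k j])
  then show "v + w \<in> gen_eigenspace X z" by (auto simp: in_gen_eigenspace_iff_poly_act)
next
  fix c v assume "v \<in> gen_eigenspace X z"
  then show "c *s v \<in> gen_eigenspace X z"
    by (auto simp: in_gen_eigenspace_iff_poly_act poly_act_scale_vec)
qed

lemma poly_act_in_gen_eigenspace:
  assumes "v \<in> gen_eigenspace X z"
  shows "poly_act p X v \<in> gen_eigenspace X z"
proof (rule poly_act_in_csubspace[OF csubspace_gen_eigenspace _ assms])
  show "invariant X (gen_eigenspace X z)"
    unfolding invariant_def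
  proof
    fix v assume "v \<in> gen_eigenspace X z"
    then obtain k where "poly_act ([:-z, 1:] ^ k) X v = 0"
      by (auto simp: in_gen_eigenspace_iff_poly_act)
    then have "poly_act ([:-z, 1:] ^ k) X (X *v v) = 0"
      by (simp add: poly_act_commute[symmetric])
    then show "X *v v \<in> gen_eigenspace X z"
      by (auto simp: in_gen_eigenspace_iff_poly_act)
  qed
qed

lemma gen_eigenspace_disjoint:
  assumes "v \<in> gen_eigenspace X z" "v \<in> gen_eigenspace X \<mu>" "z \<noteq> \<mu>"
  shows "v = 0"
proof -
  obtain k j where "poly_act ([:-z, 1:] ^ k) X v = 0" "poly_act ([:-\<mu>, 1:] ^ j) X v = 0"
    using assms by (auto simp: in_gen_eigenspace_iff_poly_act)
  moreover have "coprime ([:-z, 1:] ^ k) ([:-\<mu>, 1:] ^ j)"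
    by (rule coprime_linear_power) (use assms(3) in \<open>simp add: poly_power\<close>)
  ultimately show ?thesis using poly_act_coprime_eq_0 by blast
qed

lemma UNIV_vec_ne_zero: "(UNIV :: (complex^'n) set) \<noteq> {0}"
proof -
  have "axis undefined (1 :: complex) \<noteq> (0 :: complex^'n)" by (simp add: axis_eq_0_iff)
  then show ?thesis by blast
qed

lemma gen_eigenvalues_on_eq_singleton:
  assumes "csubspace W" "W \<subseteq> gen_eigenspace X z" "W \<noteq> {0}"
  shows "gen_eigenvalues_on X W = {z}"
proof -
  obtain v where "v \<in> W" "v \<noteq> 0" using assms(1,3) by (auto simp: csubspace_def)
  moreover have "\<mu> = z" if "v \<in> W" "v \<noteq> 0" "v \<in> gen_eigenspace X \<mu>" for v \<mu>
    using that assms(2) gen_eigenspace_disjoint by blast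
  ultimately show ?thesis using assms(2) unfolding gen_eigenvalues_on_def by blast
qed

text \<open>The component at \<open>\<mu>\<close> is killed by \<open>(X - \<mu>)\<^sup>k\<close>, which acts injectively on the other generalized eigenspaces.\<close>

lemma gen_eigenspace_sum_eq_0:
  assumes "finite S" "\<And>z. z \<in> S \<Longrightarrow> g z \<in> gen_eigenspace X z" "(\<Sum>z\<in>S. g z) = 0"
  shows "\<forall>z\<in>S. g z = 0"
  using assms
proof (induction S arbitrary: g rule: finite_induct)
  case (insert \<mu> S)
  obtain k where k: "poly_act ([:-\<mu>, 1:] ^ k) X (g \<mu>) = 0"
    using insert.prems(1) by (auto simp: in_gen_eigenspace_iff_poly_act)
  let ?T = "poly_act ([:-\<mu>, 1:] ^ k) X"
  have rest: "(\<Sum>z\<in>S. g z) = - g \<mu>"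
    using insert.prems(2) insert.hyps by (simp add: eq_neg_iff_add_eq_0 add.commute)
  have T: "\<forall>z\<in>S. ?T (g z) = 0"
  proof (rule insert.IH)
    show "?T (g z) \<in> gen_eigenspace X z" if "z \<in> S" for z
      using insert.prems(1) that by (simp add: poly_act_in_gen_eigenspace)
    have "(\<Sum>z\<in>S. ?T (g z)) = ?T ((-1) *s g \<mu>)"
      by (simp only: poly_act_sum_vec[symmetric] rest vector_sneg_minus1)
    then show "(\<Sum>z\<in>S. ?T (g z)) = 0" by (simp only: poly_act_scale_vec k vector_smult_rzero)
  qed
  have "g z = 0" if z: "z \<in> S" for z
  proof -
    obtain j where "poly_act ([:-z, 1:] ^ j) X (g z) = 0"
      using insert.prems(1) z by (auto simp: in_gen_eigenspace_iff_poly_act)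
    moreover have "coprime ([:-z, 1:] ^ j) ([:-\<mu>, 1:] ^ k)"
      by (rule coprime_linear_power) (use z insert.hyps in \<open>auto simp: poly_power\<close>)
    ultimately show ?thesis using T z poly_act_coprime_eq_0 by blast
  qed
  then show ?case using rest by simp
qed simp

lemma gen_eigenspace_decomposition_poly:
  assumes "finite Z" "csubspace W" "invariant X W" "w \<in> W"
    and "poly_act (\<Prod>z\<in>Z. [:-z, 1:] ^ m z) X w = 0"
  shows "\<exists>g. (\<forall>z\<in>Z. g z \<in> W \<inter> gen_eigenspace X z) \<and> w = (\<Sum>z\<in>Z. g z)"
  using assms(1,4,5)
proof (induction Z arbitrary: w rule: finite_induct)
  case (insert z Z)
  let ?q = "[:-z, 1:] ^ m z" and ?r = "\<Prod>z\<in>Z. [:-z, 1:] ^ m z"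
  have "poly ?r z \<noteq> 0" using insert.hyps by (auto simp: poly_prod prod_zero_iff poly_power)
  then obtain x y where xy: "x * ?q + y * ?r = 1"
    by (rule coprime_poly_bezout[OF coprime_linear_power])
  define w1 where "w1 = poly_act (y * ?r) X w"
  define w2 where "w2 = poly_act (x * ?q) X w"
  have w: "w = w1 + w2"
    using arg_cong[OF xy, of "\<lambda>p. poly_act p X w"] by (simp add: poly_act_add w1_def w2_def add.commute)
  have kill: "poly_act (?q * ?r) X w = 0" using insert.prems(2) insert.hyps by simp
  have "w1 \<in> W" "w2 \<in> W"
    unfolding w1_def w2_def by (rule poly_act_in_csubspace[OF assms(2,3) insert.prems(1)])+
  have "poly_act ?q X w1 = poly_act (y * (?q * ?r)) X w"
    by (simp only: w1_def poly_act_mult[symmetric] mult.left_commute)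
  then have "poly_act ?q X w1 = 0" by (simp add: poly_act_mult[of y] kill)
  then have "w1 \<in> gen_eigenspace X z" unfolding in_gen_eigenspace_iff_poly_act by blast
  have "poly_act ?r X w2 = poly_act (x * (?q * ?r)) X w"
    by (simp only: w2_def poly_act_mult[symmetric] mult.commute[of ?r] mult.assoc)
  then have "poly_act ?r X w2 = 0" by (simp add: poly_act_mult[of x] kill)
  then obtain g where g: "\<forall>z\<in>Z. g z \<in> W \<inter> gen_eigenspace X z" "w2 = (\<Sum>z\<in>Z. g z)"
    using insert.IH[OF \<open>w2 \<in> W\<close>] by blast
  have "(\<Sum>z'\<in>Z. (g(z := w1)) z') = w2"
    unfolding g(2) using insert.hyps(2) by (intro sum.cong) auto
  then have "w = (\<Sum>z'\<in>insert z Z. (g(z := w1)) z')"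
    using insert.hyps w by simp
  moreover have "\<forall>z'\<in>insert z Z. (g(z := w1)) z' \<in> W \<inter> gen_eigenspace X z'"
    using g(1) \<open>w1 \<in> W\<close> \<open>w1 \<in> gen_eigenspace X z\<close> by auto
  ultimately show ?case by blast
qed simp

lemma gen_eigenspace_decomposition:
  fixes X :: "complex^'n^'n"
  shows "\<exists>Z. finite Z \<and> (\<forall>W w. csubspace W \<longrightarrow> invariant X W \<longrightarrow> w \<in> W \<longrightarrow>
    (\<exists>g. (\<forall>z\<in>Z. g z \<in> W \<inter> gen_eigenspace X z) \<and> w = (\<Sum>z\<in>Z. g z)))"
proof -
  obtain p where p: "p \<noteq> 0" "\<And>v. poly_act p X v = 0" using annihilating_poly by blast
  let ?Z = "{z. poly p z = 0}"
  have kill: "poly_act (\<Prod>z\<in>?Z. [:-z, 1:] ^ order z p) X w = 0" for w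
  proof -
    have "lead_coeff p *s poly_act (\<Prod>z\<in>?Z. [:-z, 1:] ^ order z p) X w = poly_act p X w"
      by (simp only: poly_act_smult[symmetric] complex_poly_decompose)
    with p show ?thesis by simp
  qed
  have "finite ?Z" by (rule poly_roots_finite[OF p(1)])
  moreover have "\<forall>W w. csubspace W \<longrightarrow> invariant X W \<longrightarrow> w \<in> W \<longrightarrow>
    (\<exists>g. (\<forall>z\<in>?Z. g z \<in> W \<inter> gen_eigenspace X z) \<and> w = (\<Sum>z\<in>?Z. g z))"
    using gen_eigenspace_decomposition_poly[OF \<open>finite ?Z\<close> _ _ _ kill] by blast
  ultimately show ?thesis by blast
qed

lemma gen_eigenspace_inter_nonzero:
  fixes X :: "complex^'n^'n"
  assumes "csubspace W" "invariant X W" "W \<noteq> {0}"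
  obtains \<alpha> where "W \<inter> gen_eigenspace X \<alpha> \<noteq> {0}"
proof -
  obtain v where v: "v \<in> W" "v \<noteq> 0" using assms(1,3) by (auto simp: csubspace_def)
  obtain Z where Z: "\<forall>W w. csubspace W \<longrightarrow> invariant X W \<longrightarrow> w \<in> W \<longrightarrow>
    (\<exists>g. (\<forall>z\<in>Z. g z \<in> W \<inter> gen_eigenspace X z) \<and> w = (\<Sum>z\<in>Z. g z))"
    using gen_eigenspace_decomposition[of X] by blast
  obtain g where g: "\<forall>z\<in>Z. g z \<in> W \<inter> gen_eigenspace X z" "v = (\<Sum>z\<in>Z. g z)"
    using Z[rule_format, OF assms(1,2) v(1)] by blast
  have "\<exists>\<alpha>\<in>Z. g \<alpha> \<noteq> 0"
  proof (rule ccontr)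
    assume "\<not> (\<exists>\<alpha>\<in>Z. g \<alpha> \<noteq> 0)"
    then have "v = 0" using g(2) by simp
    with v(2) show False ..
  qed
  then show ?thesis using g(1) that by blast
qed

lemma gen_eigenspace_eq_UNIV:
  fixes X :: "complex^'n^'n"
  assumes "\<And>\<nu>. \<nu> \<noteq> \<mu> \<Longrightarrow> gen_eigenspace X \<nu> = {0}"
  shows "gen_eigenspace X \<mu> = UNIV"
proof -
  obtain Z where Z: "\<forall>W w. csubspace W \<longrightarrow> invariant X W \<longrightarrow> w \<in> W \<longrightarrow>
    (\<exists>g. (\<forall>z\<in>Z. g z \<in> W \<inter> gen_eigenspace X z) \<and> w = (\<Sum>z\<in>Z. g z))"
    using gen_eigenspace_decomposition[of X] by blast
  have UNIV: "csubspace UNIV" "invariant X UNIV" by (simp_all add: csubspace_def invariant_def)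
  have "v \<in> gen_eigenspace X \<mu>" for v
  proof -
    obtain g where g: "\<forall>z\<in>Z. g z \<in> gen_eigenspace X z" "v = (\<Sum>z\<in>Z. g z)"
      using Z[rule_format, OF UNIV, of v] by blast
    have "g z \<in> gen_eigenspace X \<mu>" if "z \<in> Z" for z
      using g(1) that assms csubspace_gen_eigenspace[of X \<mu>]
      by (cases "z = \<mu>") (auto simp: csubspace_def)
    then show ?thesis unfolding g(2) by (rule csubspace_sum[OF csubspace_gen_eigenspace])
  qed
  then show ?thesis by blast
qed

lemma gen_eigenspace_uniform_index:
  fixes X :: "complex^'n^'n"
  shows "\<exists>k. \<forall>w\<in>gen_eigenspace X z. mpow (X - mat z) k *v w = 0"
proof -
  obtain p where p: "p \<noteq> 0" "\<And>v. poly_act p X v = 0" using annihilating_poly by blast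
  obtain r where r: "p = [:-z, 1:] ^ order z p * r" "\<not> [:-z, 1:] dvd r"
    using order_decomp[OF p(1)] by blast
  have "poly_act ([:-z, 1:] ^ order z p) X w = 0" if w: "w \<in> gen_eigenspace X z" for w
  proof -
    let ?w = "poly_act ([:-z, 1:] ^ order z p) X w"
    obtain j where "poly_act ([:-z, 1:] ^ j) X ?w = 0"
      using poly_act_in_gen_eigenspace[OF w] by (auto simp: in_gen_eigenspace_iff_poly_act)
    moreover have "poly_act r X ?w = 0"
      using p(2)[of w] by (subst (asm) r(1)) (simp add: poly_act_mult[symmetric] mult.commute)
    moreover have "coprime ([:-z, 1:] ^ j) r"
      using r(2) dvd_iff_poly_eq_0[of "-z" r] by (intro coprime_linear_power) simp
    ultimately show ?thesis using poly_act_coprime_eq_0 by blast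
  qed
  then show ?thesis by (auto simp: poly_act_linear_power)
qed

lemma nilpotent_if_gen_eigenspace_0_eq_UNIV:
  fixes X :: "complex^'n^'n"
  assumes "gen_eigenspace X 0 = UNIV"
  shows "\<exists>k. mpow X k = 0"
proof -
  obtain k where "\<forall>w\<in>gen_eigenspace X 0. mpow (X - mat 0) k *v w = 0"
    using gen_eigenspace_uniform_index by blast
  then have "mpow X k = 0" using assms by (simp add: mat_0 matrix_eq)
  then show ?thesis ..
qed

lemma joint_gen_eigenspace_sum_eq_0:
  assumes "finite S" "finite T"
    and f: "\<forall>s\<in>S \<times> T. f s \<in> gen_eigenspace A (fst s) \<inter> gen_eigenspace B (snd s)"
    and sum: "(\<Sum>s\<in>S \<times> T. f s) = 0"
  shows "\<forall>s\<in>S \<times> T. f s = 0"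
proof -
  have rows: "\<forall>\<alpha>\<in>S. (\<Sum>\<beta>\<in>T. f (\<alpha>, \<beta>)) = 0"
  proof (rule gen_eigenspace_sum_eq_0[OF assms(1)])
    show "(\<Sum>\<beta>\<in>T. f (\<alpha>, \<beta>)) \<in> gen_eigenspace A \<alpha>" if "\<alpha> \<in> S" for \<alpha>
      using f that by (intro csubspace_sum[OF csubspace_gen_eigenspace]) auto
    show "(\<Sum>\<alpha>\<in>S. \<Sum>\<beta>\<in>T. f (\<alpha>, \<beta>)) = 0"
      using sum by (simp add: sum.cartesian_product)
  qed
  have "f (\<alpha>, \<beta>) = 0" if "\<alpha> \<in> S" "\<beta> \<in> T" for \<alpha> \<beta>
  proof -
    have "\<forall>\<beta>\<in>T. f (\<alpha>, \<beta>) = 0"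
      using f rows that(1) by (intro gen_eigenspace_sum_eq_0[OF assms(2)]) auto
    then show ?thesis using that(2) by blast
  qed
  then show ?thesis by auto
qed

lemma is_direct_sum_joint_gen_eigenspaces:
  fixes A B :: "complex^'n^'n"
  assumes "\<And>\<alpha>. invariant B (gen_eigenspace A \<alpha>)"
  obtains S T where "finite S" "finite T"
    "is_direct_sum (S \<times> T) (\<lambda>s. gen_eigenspace A (fst s) \<inter> gen_eigenspace B (snd s))"
proof -
  obtain S where S: "finite S" "\<forall>W w. csubspace W \<longrightarrow> invariant A W \<longrightarrow> w \<in> W \<longrightarrow>
    (\<exists>g. (\<forall>z\<in>S. g z \<in> W \<inter> gen_eigenspace A z) \<and> w = (\<Sum>z\<in>S. g z))"
    using gen_eigenspace_decomposition[of A] by blast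
  obtain T where T: "finite T" "\<forall>W w. csubspace W \<longrightarrow> invariant B W \<longrightarrow> w \<in> W \<longrightarrow>
    (\<exists>g. (\<forall>z\<in>T. g z \<in> W \<inter> gen_eigenspace B z) \<and> w = (\<Sum>z\<in>T. g z))"
    using gen_eigenspace_decomposition[of B] by blast
  have UNIV: "csubspace UNIV" "invariant A UNIV" by (simp_all add: csubspace_def invariant_def)
  let ?V = "\<lambda>s. gen_eigenspace A (fst s) \<inter> gen_eigenspace B (snd s)"
  have span: "\<exists>f. (\<forall>s\<in>S \<times> T. f s \<in> ?V s) \<and> v = (\<Sum>s\<in>S \<times> T. f s)" for v
  proof -
    obtain g where g: "\<forall>\<alpha>\<in>S. g \<alpha> \<in> gen_eigenspace A \<alpha>" "v = (\<Sum>\<alpha>\<in>S. g \<alpha>)"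
      using S(2)[rule_format, OF UNIV, of v] by blast
    have "\<forall>\<alpha>\<in>S. \<exists>h. (\<forall>\<beta>\<in>T. h \<beta> \<in> gen_eigenspace A \<alpha> \<inter> gen_eigenspace B \<beta>)
        \<and> g \<alpha> = (\<Sum>\<beta>\<in>T. h \<beta>)"
    proof
      fix \<alpha> assume "\<alpha> \<in> S"
      then have "g \<alpha> \<in> gen_eigenspace A \<alpha>" using g(1) by blast
      then show "\<exists>h. (\<forall>\<beta>\<in>T. h \<beta> \<in> gen_eigenspace A \<alpha> \<inter> gen_eigenspace B \<beta>)
          \<and> g \<alpha> = (\<Sum>\<beta>\<in>T. h \<beta>)"
        using T(2)[rule_format, OF csubspace_gen_eigenspace assms] by blast
    qed
    then have "\<exists>h. \<forall>\<alpha>\<in>S. (\<forall>\<beta>\<in>T. h \<alpha> \<beta> \<in> gen_eigenspace A \<alpha> \<inter> gen_eigenspace B \<beta>)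
        \<and> g \<alpha> = (\<Sum>\<beta>\<in>T. h \<alpha> \<beta>)"
      by (rule bchoice)
    then obtain h where h: "\<forall>\<alpha>\<in>S. (\<forall>\<beta>\<in>T. h \<alpha> \<beta> \<in> gen_eigenspace A \<alpha> \<inter> gen_eigenspace B \<beta>)
        \<and> g \<alpha> = (\<Sum>\<beta>\<in>T. h \<alpha> \<beta>)"
      by blast
    have "v = (\<Sum>\<alpha>\<in>S. \<Sum>\<beta>\<in>T. h \<alpha> \<beta>)" unfolding g(2) by (rule sum.cong[OF refl]) (use h in blast)
    also have "\<dots> = (\<Sum>s\<in>S \<times> T. case_prod h s)" by (rule sum.cartesian_product)
    finally show ?thesis using h by (intro exI[of _ "case_prod h"]) auto
  qed
  have "is_direct_sum (S \<times> T) ?V"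
    unfolding is_direct_sum_def
  proof (intro conjI allI impI)
    fix v show "\<exists>f. (\<forall>s\<in>S \<times> T. f s \<in> ?V s) \<and> v = (\<Sum>s\<in>S \<times> T. f s)" by (rule span)
  next
    fix f assume "(\<forall>s\<in>S \<times> T. f s \<in> ?V s) \<and> (\<Sum>s\<in>S \<times> T. f s) = 0"
    then show "\<forall>s\<in>S \<times> T. f s = 0" using joint_gen_eigenspace_sum_eq_0[OF S(1) T(1)] by blast
  qed
  with S(1) T(1) show ?thesis by (rule that)
qed

lemma is_direct_sum_nonzero_summands:
  assumes "finite S" "is_direct_sum S V" "\<And>s. 0 \<in> V s"
  shows "is_direct_sum {s\<in>S. V s \<noteq> {0}} V"
  unfolding is_direct_sum_def
proof (intro conjI allI impI)
  let ?S = "{s\<in>S. V s \<noteq> {0}}"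
  fix v
  obtain f where f: "\<forall>s\<in>S. f s \<in> V s" "v = (\<Sum>s\<in>S. f s)"
    using assms(2) unfolding is_direct_sum_def by blast
  have "(\<Sum>s\<in>S. f s) = (\<Sum>s\<in>?S. f s)"
    using assms(1) f(1) by (intro sum.mono_neutral_right) auto
  then show "\<exists>f. (\<forall>s\<in>?S. f s \<in> V s) \<and> v = (\<Sum>s\<in>?S. f s)"
    using f by (intro exI[of _ f]) auto
next
  let ?S = "{s\<in>S. V s \<noteq> {0}}"
  fix f assume f: "(\<forall>s\<in>?S. f s \<in> V s) \<and> (\<Sum>s\<in>?S. f s) = 0"
  define F where "F s = (if s \<in> ?S then f s else 0)" for s
  have "(\<Sum>s\<in>S. F s) = (\<Sum>s\<in>?S. F s)"
    using assms(1) by (intro sum.mono_neutral_right) (auto simp: F_def)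
  also have "\<dots> = 0" using f by (simp add: F_def)
  finally have "(\<Sum>s\<in>S. F s) = 0" .
  moreover have "\<forall>s\<in>S. F s \<in> V s" using f assms(3) by (simp add: F_def)
  ultimately have "\<forall>s\<in>S. F s = 0" using assms(2) unfolding is_direct_sum_def by blast
  then show "\<forall>s\<in>?S. f s = 0" unfolding F_def by (metis (no_types, lifting) mem_Collect_eq)
qed

lemma joint_gen_eigenspace_decomposition:
  fixes A B :: "complex^'n^'n"
  assumes "\<And>\<alpha>. invariant B (gen_eigenspace A \<alpha>)"
  obtains \<Sigma> where "finite \<Sigma>"
    "is_direct_sum \<Sigma> (\<lambda>s. gen_eigenspace A (fst s) \<inter> gen_eigenspace B (snd s))"
    "\<And>s. s \<in> \<Sigma> \<Longrightarrow> gen_eigenspace A (fst s) \<inter> gen_eigenspace B (snd s) \<noteq> {0}"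
proof -
  let ?V = "\<lambda>s. gen_eigenspace A (fst s) \<inter> gen_eigenspace B (snd s)"
  obtain S T where ST: "finite S" "finite T" "is_direct_sum (S \<times> T) ?V"
    using is_direct_sum_joint_gen_eigenspaces[OF assms] by blast
  show ?thesis
  proof (rule that)
    show "finite {s \<in> S \<times> T. ?V s \<noteq> {0}}" using ST(1,2) by simp
    show "is_direct_sum {s \<in> S \<times> T. ?V s \<noteq> {0}} ?V"
      using ST by (intro is_direct_sum_nonzero_summands) (auto simp: gen_eigenspace_def)
  qed simp
qed

section \<open>Commutators\<close>

lemma mpow_commutator:
  assumes comm: "\<And>v. Q *v (X *v v) = X *v (Q *v v) + M *v v"
    and M_comm: "\<And>v. Q *v (M *v v) = M *v (Q *v v)"
  shows "mpow Q (Suc k) *v (X *v v)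
    = X *v (mpow Q (Suc k) *v v) + of_nat (Suc k) *s (M *v (mpow Q k *v v))"
proof (induction k)
  case 0
  then show ?case by (simp add: mpow_Suc_mult_vec comm)
next
  case (Suc k)
  let ?u = "mpow Q (Suc k) *v v" and ?c = "of_nat (Suc k) :: complex"
  have u: "Q *v (mpow Q k *v v) = ?u" by (simp only: mpow_Suc_mult_vec)
  have "mpow Q (Suc (Suc k)) *v (X *v v) = Q *v (X *v ?u + ?c *s (M *v (mpow Q k *v v)))"
    by (simp only: mpow_Suc_mult_vec[of Q "Suc k"] Suc)
  also have "\<dots> = X *v (Q *v ?u) + M *v ?u + ?c *s (M *v ?u)"
    by (simp only: matrix_vector_right_distrib vector_scalar_commute comm M_comm u)
  also have "\<dots> = X *v (Q *v ?u) + (1 + ?c) *s (M *v ?u)"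
    by (simp only: vector_sadd_rdistrib vector_smult_lid add.assoc)
  finally show ?case by (simp only: mpow_Suc_mult_vec[of Q "Suc k"] of_nat_Suc[of "Suc k"])
qed

lemma mpow_shift_commutator:
  fixes X Y M :: "complex^'n^'n"
  assumes "\<And>v. Y *v (X *v v) = X *v (Y *v v) + M *v v"
    and "\<And>v. Y *v (M *v v) = M *v (Y *v v)"
  shows "mpow (Y - mat \<mu>) (Suc k) *v (X *v v)
    = X *v (mpow (Y - mat \<mu>) (Suc k) *v v) + of_nat (Suc k) *s (M *v (mpow (Y - mat \<mu>) k *v v))"
  by (rule mpow_commutator)
    (simp_all add: assms diff_mat_mult_vec matrix_vector_mult_diff_distrib vector_scalar_commute)

lemma invariant_gen_eigenspace_commutator:
  fixes X Y M :: "complex^'n^'n"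
  assumes "\<And>v. Y *v (X *v v) = X *v (Y *v v) + M *v v"
    and "\<And>v. Y *v (M *v v) = M *v (Y *v v)"
  shows "invariant X (gen_eigenspace Y \<mu>)"
  unfolding invariant_def gen_eigenspace_def
proof (intro ballI)
  fix v assume "v \<in> {v. \<exists>k. mpow (Y - mat \<mu>) k *v v = 0}"
  then obtain k where "mpow (Y - mat \<mu>) k *v v = 0" by blast
  then have "mpow (Y - mat \<mu>) (Suc k) *v (X *v v) = 0"
    using mpow_shift_commutator[OF assms, of \<mu> k v] by (simp add: mpow_Suc_mult_vec)
  then show "X *v v \<in> {v. \<exists>k. mpow (Y - mat \<mu>) k *v v = 0}" by blast
qed

lemma invariant_gen_eigenspace_commuting:
  fixes X Y :: "complex^'n^'n"
  assumes "Y ** X = X ** Y"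
  shows "invariant X (gen_eigenspace Y \<mu>)"
  by (rule invariant_gen_eigenspace_commutator[where M = 0])
    (simp_all add: matrix_vector_mul_assoc assms)

text \<open>Take \<open>k\<close> minimal with \<open>(Y - \<mu>)\<^sup>k W = 0\<close> and apply the commutator identity to \<open>Xw\<close>:
  the extra term \<open>k M (Y - \<mu>)\<^sup>k\<^sup>-\<^sup>1 w\<close> must vanish.\<close>

lemma commutator_kernel_nonzero:
  fixes X Y M :: "complex^'n^'n"
  assumes comm: "\<And>v. Y *v (X *v v) = X *v (Y *v v) + M *v v"
    and M_comm: "\<And>v. Y *v (M *v v) = M *v (Y *v v)"
    and W: "csubspace W" "invariant X W" "invariant Y W" "W \<subseteq> gen_eigenspace Y \<mu>" "W \<noteq> {0}"
  obtains t where "t \<in> W" "t \<noteq> 0" "M *v t = 0"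
proof -
  let ?Q = "mpow (Y - mat \<mu>)"
  define P where "P k \<longleftrightarrow> (\<forall>w\<in>W. ?Q k *v w = 0)" for k
  obtain k0 where "\<forall>w\<in>gen_eigenspace Y \<mu>. ?Q k0 *v w = 0"
    using gen_eigenspace_uniform_index by blast
  then have "P k0" using W(4) unfolding P_def by blast
  define k where "k = (LEAST k. P k)"
  have "P k" using \<open>P k0\<close> unfolding k_def by (rule LeastI)
  moreover have "\<not> P 0" using W(1,5) by (auto simp: P_def csubspace_def)
  ultimately obtain j where j: "k = Suc j" by (cases k) auto
  then have "\<not> P j" using not_less_Least[of j P] k_def by simp
  then obtain w where w: "w \<in> W" "?Q j *v w \<noteq> 0" by (auto simp: P_def)
  have "X *v w \<in> W" using W(2) w(1) by (simp add: invariant_def)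
  then have "of_nat (Suc j) *s (M *v (?Q j *v w)) = 0"
    using mpow_shift_commutator[OF comm M_comm, of \<mu> j w] \<open>P k\<close> w(1) by (simp add: P_def j)
  then have "M *v (?Q j *v w) = 0" by (simp del: of_nat_Suc)
  moreover have "?Q j *v w \<in> W"
    using poly_act_in_csubspace[OF W(1,3) w(1), of "[:-\<mu>, 1:] ^ j"]
    by (simp add: poly_act_linear_power)
  ultimately show ?thesis using that w(2) by blast
qed

section \<open>Representations of the Jacobi algebra\<close>

locale jacobi_rep =
  fixes A B C :: "complex^'n^'n" and d :: nat
  assumes d_ge_2: "d \<ge> 2"
    and B_C_commute: "B ** C = C ** B"
    and C_A_commute: "C ** A = A ** C"
    and A_B_relation: "A ** B - B ** A + mat (of_nat d) ** mpow C (d - 1) = 0"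
begin

definition N :: "complex^'n^'n" where
  "N = mat (of_nat d) ** mpow C (d - 1)"

lemma N_mult_vec: "N *v v = of_nat d *s (mpow C (d - 1) *v v)"
  by (simp add: N_def matrix_vector_mul_assoc[symmetric] mat_mult_vec)

lemma B_A_commutator: "B *v (A *v v) = A *v (B *v v) + N *v v"
proof -
  have "B ** A = A ** B + N" using A_B_relation by (simp add: N_def algebra_simps)
  then show ?thesis by (simp add: matrix_vector_mul_assoc matrix_vector_mult_add_rdistrib)
qed

lemma A_B_commutator: "A *v (B *v v) = B *v (A *v v) + (- N) *v v"
  by (simp add: B_A_commutator uminus_matrix_mult_vec)

lemma N_commute:
  assumes "C ** X = X ** C"
  shows "X *v (N *v v) = N *v (X *v v)"
proof -
  have XC: "X *v (C *v u) = C *v (X *v u)" for u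
    by (simp add: matrix_vector_mul_assoc assms)
  have "X *v (mpow C k *v v) = mpow C k *v (X *v v)" for k
    by (induction k) (simp_all add: mpow_Suc_mult_vec XC)
  then show ?thesis by (simp add: N_mult_vec vector_scalar_commute)
qed

lemma A_neg_N_commute: "A *v ((- N) *v v) = (- N) *v (A *v v)"
  using N_commute[OF C_A_commute] by (simp add: uminus_matrix_mult_vec vec.neg)

lemma invariant_gen_eigenspaces:
  assumes "X \<in> {A, B, C}" "Y \<in> {A, B, C}"
  shows "invariant X (gen_eigenspace Y \<mu>)"
proof -
  have "invariant A (gen_eigenspace B \<mu>)"
    by (rule invariant_gen_eigenspace_commutator[OF B_A_commutator
          N_commute[OF B_C_commute[symmetric]]])
  moreover have "invariant B (gen_eigenspace A \<mu>)"
    by (rule invariant_gen_eigenspace_commutator[OF A_B_commutator A_neg_N_commute])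
  ultimately show ?thesis
    using assms B_C_commute C_A_commute invariant_gen_eigenspace_commuting by auto
qed

lemma gen_eigenspace_C_trivial:
  assumes "\<nu> \<noteq> 0"
  shows "gen_eigenspace C \<nu> = {0}"
proof (rule ccontr)
  assume ne0: "gen_eigenspace C \<nu> \<noteq> {0}"
  have "invariant A (gen_eigenspace C \<nu>)" by (rule invariant_gen_eigenspaces) simp_all
  then obtain \<alpha> where ne: "gen_eigenspace C \<nu> \<inter> gen_eigenspace A \<alpha> \<noteq> {0}"
    using gen_eigenspace_inter_nonzero[OF csubspace_gen_eigenspace _ ne0] by blast
  let ?W = "gen_eigenspace C \<nu> \<inter> gen_eigenspace A \<alpha>"
  have W: "csubspace ?W" "invariant B ?W" "invariant A ?W" "?W \<subseteq> gen_eigenspace A \<alpha>"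
    by (simp_all add: csubspace_inter csubspace_gen_eigenspace invariant_inter
        invariant_gen_eigenspaces)
  obtain t where t: "t \<in> ?W" "t \<noteq> 0" "(- N) *v t = 0"
    using commutator_kernel_nonzero[OF A_B_commutator A_neg_N_commute W ne] by blast
  then have "mpow (C - mat 0) (d - 1) *v t = 0"
    using d_ge_2 by (simp add: uminus_matrix_mult_vec N_mult_vec mat_0)
  then have "t \<in> gen_eigenspace C 0" by (auto simp: gen_eigenspace_def)
  then show False using t(1,2) assms gen_eigenspace_disjoint by blast
qed

lemma gen_eigenspace_C_0: "gen_eigenspace C 0 = UNIV"
  by (intro gen_eigenspace_eq_UNIV gen_eigenspace_C_trivial)

lemma C_nilpotent: "\<exists>k. mpow C k = 0"
  by (rule nilpotent_if_gen_eigenspace_0_eq_UNIV[OF gen_eigenspace_C_0])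

lemma gen_eigenvalues_on_C: "gen_eigenvalues_on C UNIV = {0}"
  by (rule gen_eigenvalues_on_eq_singleton)
    (simp_all add: csubspace_def gen_eigenspace_C_0 UNIV_vec_ne_zero)

lemma joint_gen_eigenspace_properties:
  assumes ne: "gen_eigenspace A \<alpha> \<inter> gen_eigenspace B \<beta> \<noteq> {0}"
  defines "V \<equiv> gen_eigenspace A \<alpha> \<inter> gen_eigenspace B \<beta>"
  shows "csubspace V \<and> invariant A V \<and> invariant B V \<and> invariant C V
    \<and> gen_eigenvalues_on A V = {\<alpha>} \<and> gen_eigenvalues_on B V = {\<beta>}
    \<and> gen_eigenvalues_on C V = {0}"
proof -
  have V: "csubspace V" by (simp add: V_def csubspace_inter csubspace_gen_eigenspace)
  have "invariant X V" if "X \<in> {A, B, C}" for X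
    using that by (simp add: V_def invariant_inter invariant_gen_eigenspaces)
  moreover have "gen_eigenvalues_on A V = {\<alpha>}"
    by (rule gen_eigenvalues_on_eq_singleton[OF V]) (simp_all add: V_def ne)
  moreover have "gen_eigenvalues_on B V = {\<beta>}"
    by (rule gen_eigenvalues_on_eq_singleton[OF V]) (simp_all add: V_def ne)
  moreover have "gen_eigenvalues_on C V = {0}"
    by (rule gen_eigenvalues_on_eq_singleton[OF V]) (simp_all add: V_def ne gen_eigenspace_C_0)
  ultimately show ?thesis using V by simp
qed

lemma AB_joint_gen_eigenspace_decomposition:
  obtains \<Sigma> where "finite \<Sigma>"
    "is_direct_sum \<Sigma> (\<lambda>s. gen_eigenspace A (fst s) \<inter> gen_eigenspace B (snd s))"
    "\<And>s. s \<in> \<Sigma> \<Longrightarrow> gen_eigenspace A (fst s) \<inter> gen_eigenspace B (snd s) \<noteq> {0}"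
proof -
  have "invariant B (gen_eigenspace A \<alpha>)" for \<alpha> by (rule invariant_gen_eigenspaces) simp_all
  then show ?thesis using that joint_gen_eigenspace_decomposition by blast
qed

end

theorem mainTheorem8:

  fixes A B C :: "complex^'n^'n" and d :: nat
  assumes "d \<ge> 2"
    and "B ** C = C ** B"
    and "C ** A = A ** C"
    and "A ** B - B ** A + mat (of_nat d) ** mpow C (d - 1) = 0"
  shows "(\<forall>X\<in>{A, B, C}. \<forall>Y\<in>{A, B, C}. \<forall>\<mu>. invariant X (gen_eigenspace Y \<mu>))
    \<and> (\<exists>k. mpow C k = 0)
    \<and> gen_eigenvalues_on C UNIV = {0}
    \<and> (\<exists>\<Sigma> :: (complex \<times> complex) set. \<exists>V :: complex \<times> complex \<Rightarrow> (complex^'n) set.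
         finite \<Sigma> \<and> is_direct_sum \<Sigma> V \<and>
         (\<forall>s\<in>\<Sigma>. V s = gen_eigenspace A (fst s) \<inter> gen_eigenspace B (snd s)
              \<and> csubspace (V s) \<and> V s \<noteq> {0}
              \<and> invariant A (V s) \<and> invariant B (V s) \<and> invariant C (V s)
              \<and> gen_eigenvalues_on A (V s) = {fst s}
              \<and> gen_eigenvalues_on B (V s) = {snd s}
              \<and> gen_eigenvalues_on C (V s) = {0}))"
proof -
  interpret jacobi_rep A B C d
    using assms by unfold_locales
  obtain \<Sigma> where \<Sigma>: "finite \<Sigma>"
    "is_direct_sum \<Sigma> (\<lambda>s. gen_eigenspace A (fst s) \<inter> gen_eigenspace B (snd s))"
    "\<And>s. s \<in> \<Sigma> \<Longrightarrow> gen_eigenspace A (fst s) \<inter> gen_eigenspace B (snd s) \<noteq> {0}"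
    using AB_joint_gen_eigenspace_decomposition by blast
  have invariant: "\<forall>X\<in>{A, B, C}. \<forall>Y\<in>{A, B, C}. \<forall>\<mu>. invariant X (gen_eigenspace Y \<mu>)"
    by (intro ballI allI invariant_gen_eigenspaces)
  have summands: "\<forall>s\<in>\<Sigma>. gen_eigenspace A (fst s) \<inter> gen_eigenspace B (snd s) \<noteq> {0}
      \<and> csubspace (gen_eigenspace A (fst s) \<inter> gen_eigenspace B (snd s))
      \<and> invariant A (gen_eigenspace A (fst s) \<inter> gen_eigenspace B (snd s))
      \<and> invariant B (gen_eigenspace A (fst s) \<inter> gen_eigenspace B (snd s))
      \<and> invariant C (gen_eigenspace A (fst s) \<inter> gen_eigenspace B (snd s))
      \<and> gen_eigenvalues_on A (gen_eigenspace A (fst s) \<inter> gen_eigenspace B (snd s)) = {fst s}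
      \<and> gen_eigenvalues_on B (gen_eigenspace A (fst s) \<inter> gen_eigenspace B (snd s)) = {snd s}
      \<and> gen_eigenvalues_on C (gen_eigenspace A (fst s) \<inter> gen_eigenspace B (snd s)) = {0}"
    using \<Sigma>(3) joint_gen_eigenspace_properties by blast
  show ?thesis
    by (intro conjI exI[of _ \<Sigma>]
        exI[of _ "\<lambda>s. gen_eigenspace A (fst s) \<inter> gen_eigenspace B (snd s)"])
      (use invariant summands \<Sigma>(1,2) C_nilpotent gen_eigenvalues_on_C in auto)
qed

end
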